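(* Let $\alpha>0$, and let $N^\pm(\alpha)$, $\sigma$ be as in the context. Let $N:\mathbb R\to\mathbb R$ be the $\alpha$-periodic function with $N(t)=N^+(\alpha)e^{-t}$ for $t\in(0,\alpha)$, and define, for $s\ge0$, $t\in\mathbb R$, $$n(s,t)=N(t-s)\exp\Big(-\int_0^s\mathbf 1_{\{u>\sigma(N(t-s+u))\}}\,du\Big),$$ the periodic solution of $\partial_t n+\partial_s n+\mathbf 1_{\{s>\sigma(N(t))\}}n=0$, $n(0,t)=N(t)$. Then for every $t\in\mathbb R$ at which $N$ is continuous, $$N(t)=\int_{\sigma(N(t))}^\infty n(s,t)\,ds\qquad\text{and}\qquad\int_0^\infty n(s,t)\,ds=1,$$ i.e. $(n,N)$ is a periodic solution of the nonlinear model with $p(s,x)=\mathbf 1_{\{s>\sigma(x)\}}$.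
   Context: For $\alpha>0$: $N^-(\alpha)=\frac1{2e^\alpha-1}$, $N^+(\alpha)=\frac{e^\alpha}{2e^\alpha-1}$ (so $0<N^-<N^+<1$), and $\sigma(x)=2\alpha$ for $x\in[0,N^-(\alpha)]$, $\sigma(x)=2\alpha-\ln x+\ln N^-(\alpha)$ for $x\in[N^-(\alpha),N^+(\alpha)]$, $\sigma(x)=\alpha$ for $x\ge N^+(\alpha)$. *)

theory Defs
  imports "HOL-Analysis.Analysis"
begin

definition Nminus :: "real \<Rightarrow> real" where
  "Nminus \<alpha> = 1 / (2 * exp \<alpha> - 1)"

definition Nplus :: "real \<Rightarrow> real" where
  "Nplus \<alpha> = exp \<alpha> / (2 * exp \<alpha> - 1)"

text \<open>The threshold function sigma (the value for x < 0 is irrelevant; we use 2 alpha).\<close>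
definition sigma :: "real \<Rightarrow> real \<Rightarrow> real" where
  "sigma \<alpha> x =
     (if x \<le> Nminus \<alpha> then 2 * \<alpha>
      else if x \<le> Nplus \<alpha> then 2 * \<alpha> - ln x + ln (Nminus \<alpha>)
      else \<alpha>)"

definition nsol :: "real \<Rightarrow> (real \<Rightarrow> real) \<Rightarrow> real \<Rightarrow> real \<Rightarrow> real" where
  "nsol \<alpha> N s t =
     N (t - s) * exp (- integral {0..s} (\<lambda>u. if u > sigma \<alpha> (N (t - s + u)) then 1 else 0))"

end

theory Submission imports Defs begin

(*
  The periodic profile N is a sawtooth: on every period (k a, (k+1) a) it decays like
  Nplus a * exp (- phase), where the phase of w is w - a * floor (w / a).  Hence
  sigma (N w) = a + phase w off the lattice a * Z, and the death condition
  u > sigma (N (t - s + u)) becomes a plain threshold condition on u.  Integrating this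
  threshold gives the survival exponent of nsol in closed form (lemma survival_exponent),
  so nsol is an explicit piecewise exponential in s.

  Since nsol and N are invariant under t |-> t + a, and N jumps at every lattice point,
  a continuity point t can be moved into (0, a).  There the age axis splits into
  [0, t] (no deaths), [t, t + a] (no deaths, older generation) and the periods
  [t + (k+1) a, t + (k+2) a], on which the mass is geometric with ratio exp (- a).
  Summing the pieces and passing to the limit (monotone convergence) gives both identities.
*)


section \<open>Integration lemmas on the real line\<close>

lemma negligible_int_lattice: "negligible (range (\<lambda>m::int. c + of_int m * (a::real)))"
proof -
  have "range (\<lambda>m::int. c + of_int m * a) = (\<Union>m. {c + of_int m * a})" by auto
  moreover have "negligible (\<Union>m::int. {c + of_int m * a})"
    by (rule negligible_countable_Union) auto
  ultimately show ?thesis by simp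
qed

lemma has_integral_exp_piece:
  fixes f :: "real \<Rightarrow> real"
  assumes "a \<le> b" and f: "\<And>s. s \<in> {a<..<b} \<Longrightarrow> f s = C * exp (s - b)"
  shows "(f has_integral C * (1 - exp (a - b))) {a..b}"
proof -
  have "((\<lambda>s. C * exp (s - b)) has_integral (C * exp (b - b) - C * exp (a - b))) {a..b}"
    by (rule fundamental_theorem_of_calculus[OF \<open>a \<le> b\<close>])
       (auto simp flip: has_real_derivative_iff_has_vector_derivative
             intro!: derivative_eq_intros)
  then have exp_int: "((\<lambda>s. C * exp (s - b)) has_integral C * (1 - exp (a - b))) {a..b}"
    by (simp add: algebra_simps)
  show ?thesis
    by (rule has_integral_spike_finite[OF _ _ exp_int, of "{a, b}"]) (use f in auto)
qed

lemma has_integral_threshold: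
  fixes c s :: real
  assumes "0 \<le> c" "0 \<le> s"
  shows "((\<lambda>u. if u > c then 1 else 0::real) has_integral max 0 (s - c)) {0..s}"
proof (cases "c \<le> s")
  case True
  have below: "((\<lambda>u. if u > c then 1 else 0::real) has_integral 0) {0..c}"
    by (rule has_integral_spike_finite[OF _ _ has_integral_0[of "{0..c}"], of "{}"]) auto
  have one: "((\<lambda>u. 1::real) has_integral (s - c)) {c..s}"
    using has_integral_const_real[of "1::real" c s] True by simp
  have above: "((\<lambda>u. if u > c then 1 else 0::real) has_integral (s - c)) {c..s}"
    by (rule has_integral_spike_finite[OF _ _ one, of "{c}"]) auto
  show ?thesis using has_integral_combine[OF \<open>0 \<le> c\<close> True below above] True by simp
next
  case False
  have "((\<lambda>u. if u > c then 1 else 0::real) has_integral 0) {0..s}"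
    by (rule has_integral_spike_finite[OF _ _ has_integral_0[of "{0..s}"], of "{}"])
       (use False in auto)
  then show ?thesis using False by simp
qed

text \<open>Integral over a half line from integrals over growing intervals [b, b + k a]:
  for an integrand that is nonnegative outside a null set, this is monotone convergence.\<close>
lemma has_integral_halfline_limit:
  fixes f :: "real \<Rightarrow> real"
  assumes "a > 0" and E: "negligible E"
    and nonneg: "\<And>x. x \<in> {b..} - E \<Longrightarrow> f x \<ge> 0"
    and partial: "\<And>k. (f has_integral S k) {b..b + real k * a}"
    and lim: "S \<longlonglongrightarrow> L"
  shows "(f has_integral L) {b..}"
proof -
  define f' where "f' x = (if x \<in> E then 0 else f x)" for x
  define g where "g k x = (if x \<in> {b..b + real k * a} then f' x else 0)" for k x
  have "(f' has_integral S k) {b..b + real k * a}" for k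
    by (rule has_integral_spike[OF E _ partial[of k]]) (auto simp: f'_def)
  then have g_int: "(g k has_integral S k) {b..}" for k
    unfolding g_def by (subst has_integral_restrict) auto
  have g_mono: "g k x \<le> g (Suc k) x" if "x \<in> {b..}" for k x
    using nonneg[of x] that \<open>a > 0\<close> by (auto simp: g_def f'_def algebra_simps)
  have g_lim: "(\<lambda>k. g k x) \<longlonglongrightarrow> f' x" if "x \<in> {b..}" for x
  proof (rule tendsto_eventually)
    obtain n :: nat where n: "(x - b) / a < real n" using reals_Archimedean2 by blast
    show "eventually (\<lambda>k. g k x = f' x) sequentially"
    proof (rule eventually_sequentiallyI[of n])
      fix k assume "n \<le> k"
      then have "(x - b) / a < real k" using n by linarith
      then have "x - b < real k * a" using \<open>a > 0\<close> by (simp add: divide_less_eq)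
      then show "g k x = f' x" using that by (auto simp: g_def)
    qed
  qed
  have f'_int: "(f' has_integral L) {b..}"
    by (rule has_integral_monotone_convergence_increasing[OF g_int g_mono g_lim lim])
  show ?thesis by (rule has_integral_spike[OF E _ f'_int]) (auto simp: f'_def)
qed


section \<open>The periodic sawtooth profile\<close>

locale sawtooth =
  fixes a :: real and N :: "real \<Rightarrow> real"
  assumes period_pos: "a > 0"
    and periodic: "\<And>x. N (x + a) = N x"
    and on_period: "\<And>x. x \<in> {0<..<a} \<Longrightarrow> N x = Nplus a * exp (- x)"
begin

lemma Nminus_pos: "Nminus a > 0"
proof -
  have "exp a > 1" using period_pos by simp
  then have "2 * exp a - 1 > 0" by linarith
  then show ?thesis by (simp add: Nminus_def)
qed

lemma Nplus_eq: "Nplus a = exp a * Nminus a"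
  by (simp add: Nplus_def Nminus_def)

lemma Nplus_pos: "Nplus a > 0"
  using Nplus_eq Nminus_pos by simp

text \<open>The normalisation behind the total mass 1 of the periodic solution.\<close>
lemma Nplus_normalisation: "Nplus a * (2 - exp (- a)) = 1"
proof -
  have "exp a > 1" using period_pos by simp
  then have "2 * exp a - 1 > 0" by linarith
  then show ?thesis by (simp add: Nplus_def exp_minus field_simps)
qed

lemma periodic_int: "N (x + of_int m * a) = N x"
proof -
  have nat_shift: "N (y + real n * a) = N y" for y n
  proof (induction n)
    case (Suc n)
    have "N (y + real (Suc n) * a) = N ((y + real n * a) + a)" by (simp add: algebra_simps)
    then show ?case using periodic Suc by simp
  qed simp
  show ?thesis
  proof (cases "m \<ge> 0")
    case True
    then show ?thesis using nat_shift[of x "nat m"] by simp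
  next
    case False
    then have "x = (x + of_int m * a) + real (nat (- m)) * a" by simp
    then show ?thesis using nat_shift[of "x + of_int m * a" "nat (- m)"] by metis
  qed
qed

definition phase :: "real \<Rightarrow> real" where
  "phase w = w - a * of_int \<lfloor>w / a\<rfloor>"

lemma phase_bounds: "0 \<le> phase w" "phase w < a"
proof -
  have "of_int \<lfloor>w / a\<rfloor> \<le> w / a" by simp
  then show "0 \<le> phase w"
    using period_pos by (simp add: phase_def le_divide_eq mult.commute)
  have "w / a < of_int \<lfloor>w / a\<rfloor> + 1" by simp
  then show "phase w < a"
    using period_pos by (simp add: phase_def divide_less_eq algebra_simps)
qed

lemma phase_eq_zero_iff: "phase w = 0 \<longleftrightarrow> (\<exists>m::int. w = of_int m * a)"
proof
  assume "\<exists>m::int. w = of_int m * a"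
  then obtain m :: int where "w = of_int m * a" by blast
  then show "phase w = 0" using period_pos by (simp add: phase_def)
next
  assume "phase w = 0"
  then have "w = of_int \<lfloor>w / a\<rfloor> * a" by (simp add: phase_def mult.commute)
  then show "\<exists>m::int. w = of_int m * a" by blast
qed

lemma phase_off_lattice:
  assumes "x \<notin> range (\<lambda>m::int. c + of_int m * a)"
  shows "phase (x - c) \<noteq> 0"
proof
  assume "phase (x - c) = 0"
  then obtain m :: int where "x - c = of_int m * a" using phase_eq_zero_iff by blast
  then have "x = c + of_int m * a" by simp
  then show False using assms by blast
qed

lemma floor_period_eqI:
  assumes "a * of_int m \<le> w" "w < a * (of_int m + 1)"
  shows "\<lfloor>w / a\<rfloor> = m"
  using assms period_pos by (simp add: floor_eq_iff field_simps)

lemma N_phase: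
  assumes "phase w \<noteq> 0"
  shows "N w = Nplus a * exp (- phase w)"
proof -
  have "N w = N (phase w + of_int \<lfloor>w / a\<rfloor> * a)" by (simp add: phase_def)
  also have "\<dots> = N (phase w)" by (rule periodic_int)
  also have "\<dots> = Nplus a * exp (- phase w)"
    using on_period assms phase_bounds[of w] by simp
  finally show ?thesis .
qed

lemma sigma_sawtooth:
  assumes "r \<in> {0<..<a}"
  shows "sigma a (Nplus a * exp (- r)) = a + r"
proof -
  have "Nplus a * exp (- r) = Nminus a * exp (a - r)"
    using Nplus_eq by (simp add: exp_diff exp_minus field_simps)
  moreover have "exp (a - r) > 1" using assms by simp
  ultimately have "Nplus a * exp (- r) > Nminus a" using Nminus_pos by simp
  moreover have "Nplus a * exp (- r) \<le> Nplus a" using assms Nplus_pos by simp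
  moreover have "ln (Nplus a * exp (- r)) = a + ln (Nminus a) - r"
    using Nplus_eq Nminus_pos by (simp add: ln_mult)
  ultimately show ?thesis by (simp add: sigma_def)
qed

lemma sigma_N_phase:
  assumes "phase w \<noteq> 0"
  shows "sigma a (N w) = a + phase w"
  using N_phase[OF assms] sigma_sawtooth[of "phase w"] phase_bounds[of w] assms by simp


section \<open>The survival exponent of the periodic solution\<close>

lemma death_condition_iff:
  assumes "phase (t - s + u) \<noteq> 0"
  shows "u > sigma a (N (t - s + u)) \<longleftrightarrow> u > s - t + a * (of_int \<lfloor>(t - s) / a\<rfloor> + 2)"
proof -
  define w where "w = t - s + u"
  define m where "m = \<lfloor>w / a\<rfloor>"
  define c where "c = \<lfloor>(t - s) / a\<rfloor> + 2"
  have "\<not> (\<exists>m::int. w = of_int m * a)" using assms phase_eq_zero_iff[of w] by (simp add: w_def)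
  then have off_lattice: "w \<noteq> of_int c * a" by blast
  have "sigma a (N w) = a + w - a * of_int m"
    using sigma_N_phase[OF assms] by (simp add: phase_def m_def w_def)
  then have "u > sigma a (N w) \<longleftrightarrow> (t - s) < (of_int m - 1) * a"
    by (auto simp: w_def algebra_simps)
  also have "\<dots> \<longleftrightarrow> (t - s) / a < of_int (m - 1)"
    using period_pos by (simp add: pos_divide_less_eq)
  also have "\<dots> \<longleftrightarrow> c \<le> m"
    unfolding floor_less_iff[symmetric] c_def by linarith
  also have "\<dots> \<longleftrightarrow> of_int c * a \<le> w"
    using period_pos by (simp add: m_def le_floor_iff pos_le_divide_eq)
  also have "\<dots> \<longleftrightarrow> of_int c * a < w"
    using off_lattice by auto
  finally show ?thesis by (simp add: w_def c_def algebra_simps)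
qed

lemma survival_exponent:
  assumes "0 \<le> s"
  shows "integral {0..s} (\<lambda>u. if u > sigma a (N (t - s + u)) then 1 else 0)
         = max 0 (t - a * (of_int \<lfloor>(t - s) / a\<rfloor> + 2))"
proof -
  define c where "c = s - t + a * (of_int \<lfloor>(t - s) / a\<rfloor> + 2)"
  have "(t - s) / a < of_int \<lfloor>(t - s) / a\<rfloor> + 1" by linarith
  then have "c \<ge> 0" using period_pos assms by (simp add: c_def field_simps)
  have "integral {0..s} (\<lambda>u. if u > sigma a (N (t - s + u)) then 1 else 0)
        = integral {0..s} (\<lambda>u. if u > c then 1 else 0 :: real)"
  proof (rule integral_spike[OF negligible_int_lattice[of "s - t" a]])
    fix u assume "u \<in> {0..s} - range (\<lambda>m::int. s - t + of_int m * a)"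
    then have "phase (u - (s - t)) \<noteq> 0" by (intro phase_off_lattice) auto
    then have "phase (t - s + u) \<noteq> 0" by (simp add: algebra_simps)
    then show "(if u > c then 1 else 0) = (if u > sigma a (N (t - s + u)) then 1 else 0 :: real)"
      using death_condition_iff by (simp add: c_def)
  qed
  also have "\<dots> = max 0 (s - c)"
    by (rule integral_unique[OF has_integral_threshold[OF \<open>c \<ge> 0\<close> assms]])
  finally show ?thesis by (simp add: c_def)
qed

lemma nsol_formula:
  assumes "0 \<le> s" "phase (t - s) \<noteq> 0"
  shows "nsol a N s t
         = Nplus a * exp (- phase (t - s) - max 0 (t - a * (of_int \<lfloor>(t - s) / a\<rfloor> + 2)))"
  using N_phase[OF assms(2)] survival_exponent[OF assms(1), of t]
  by (simp add: nsol_def exp_diff exp_minus field_simps)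

lemma nsol_shift: "nsol a N s (t + of_int m * a) = nsol a N s t"
proof -
  have "N (t + of_int m * a + x) = N (t + x)" for x
    using periodic_int[of "t + x" m] by (simp add: algebra_simps)
  from this[of "- s"] this[of "u - s" for u] show ?thesis
    by (simp add: nsol_def algebra_simps)
qed


section \<open>The profile is discontinuous exactly on the lattice\<close>

lemma N_after_lattice:
  assumes "h \<in> {0<..<a}"
  shows "N (of_int m * a + h) = Nplus a * exp (- h)"
  using periodic_int[of h m] on_period[OF assms] by (simp add: add.commute)

text \<open>N jumps from Nplus a * exp (- a) up to Nplus a at each lattice point, so it is
  continuous only off the lattice.\<close>
lemma N_jumps:
  assumes "isCont N t"
  shows "phase t \<noteq> 0"
proof
  assume "phase t = 0"
  then obtain m :: int where t: "t = of_int m * a" using phase_eq_zero_iff by blast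
  have "eventually (\<lambda>y. Nplus a * exp (- (y - t)) = N y) (at_right t)"
    unfolding eventually_at_right_field
    using period_pos N_after_lattice[of "y - t" m for y] t by (intro exI[of _ "t + a"]) auto
  moreover have "((\<lambda>y. Nplus a * exp (- (y - t))) \<longlongrightarrow> Nplus a * exp (- (t - t))) (at_right t)"
    by (intro tendsto_intros)
  ultimately have right: "(N \<longlongrightarrow> Nplus a) (at_right t)" by (simp add: tendsto_cong)
  have "eventually (\<lambda>y. Nplus a * exp (- (y - (t - a))) = N y) (at_left t)"
    unfolding eventually_at_left_field
    using period_pos N_after_lattice[of "y - (t - a)" "m - 1" for y] t
    by (intro exI[of _ "t - a"]) (auto simp: algebra_simps)
  moreover have "((\<lambda>y. Nplus a * exp (- (y - (t - a)))) \<longlongrightarrow> Nplus a * exp (- (t - (t - a)))) (at_left t)"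
    by (intro tendsto_intros)
  ultimately have left: "(N \<longlongrightarrow> Nplus a * exp (- a)) (at_left t)" by (simp add: tendsto_cong)
  have "(N \<longlongrightarrow> N t) (at_right t)" "(N \<longlongrightarrow> N t) (at_left t)"
    using assms continuous_at_split[of t N] by (auto simp: continuous_within)
  then have "Nplus a = Nplus a * exp (- a)"
    using tendsto_unique[OF trivial_limit_at_right_real right]
          tendsto_unique[OF trivial_limit_at_left_real left] by simp
  then show False using period_pos Nplus_pos by simp
qed

section \<open>The periodic solution at a time inside the first period\<close>

context
  fixes t :: real
  assumes t_period: "t \<in> {0<..<a}"
begin

text \<open>Ages below t: the individual was born after the last jump of N and never died.\<close>
lemma nsol_young:
  assumes "0 \<le> s" "s < t"
  shows "nsol a N s t = Nplus a * exp (s - t)"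
proof -
  have floor: "\<lfloor>(t - s) / a\<rfloor> = 0"
    using assms t_period by (intro floor_period_eqI) auto
  then have phase: "phase (t - s) = t - s" by (simp add: phase_def)
  have "max 0 (t - a * (of_int \<lfloor>(t - s) / a\<rfloor> + 2)) = 0"
    using t_period floor by simp
  then show ?thesis
    using nsol_formula[of s t] phase assms by simp
qed

lemma nsol_on_period:
  assumes "t + real k * a < s" "s < t + real (Suc k) * a"
  shows "nsol a N s t = Nplus a * exp (- max 0 (t + (real k - 1) * a)) * exp (s - (t + real (Suc k) * a))"
proof -
  have floor: "\<lfloor>(t - s) / a\<rfloor> = - int (Suc k)"
    using assms by (intro floor_period_eqI) (auto simp: algebra_simps)
  have phase: "phase (t - s) = t - s + real (Suc k) * a"
    unfolding phase_def floor by (simp add: algebra_simps)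
  have exponent: "t - a * (of_int \<lfloor>(t - s) / a\<rfloor> + 2) = t + (real k - 1) * a"
    unfolding floor by (simp add: algebra_simps)
  have "0 \<le> real k * a" "0 < t" using period_pos t_period by simp_all
  then have "0 \<le> s" using assms(1) by linarith
  moreover have "phase (t - s) \<noteq> 0" using phase assms by simp
  ultimately have "nsol a N s t
      = Nplus a * exp (- phase (t - s) - max 0 (t - a * (of_int \<lfloor>(t - s) / a\<rfloor> + 2)))"
    by (rule nsol_formula)
  also have "\<dots> = Nplus a * exp (- max 0 (t + (real k - 1) * a) + (s - (t + real (Suc k) * a)))"
    unfolding phase exponent by (simp add: algebra_simps)
  finally show ?thesis by (simp only: exp_add mult.assoc)
qed

lemma integral_young: "((\<lambda>s. nsol a N s t) has_integral Nplus a * (1 - exp (- t))) {0..t}"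
  using has_integral_exp_piece[of 0 t "\<lambda>s. nsol a N s t" "Nplus a"] t_period nsol_young by simp

lemma integral_period:
  "((\<lambda>s. nsol a N s t) has_integral Nplus a * exp (- max 0 (t + (real k - 1) * a)) * (1 - exp (- a)))
     {t + real k * a .. t + real (Suc k) * a}"
proof -
  have "((\<lambda>s. nsol a N s t) has_integral Nplus a * exp (- max 0 (t + (real k - 1) * a))
          * (1 - exp ((t + real k * a) - (t + real (Suc k) * a))))
        {t + real k * a .. t + real (Suc k) * a}"
  proof (rule has_integral_exp_piece)
    show "t + real k * a \<le> t + real (Suc k) * a" using period_pos by simp
  qed (intro nsol_on_period; simp)
  moreover have "(t + real k * a) - (t + real (Suc k) * a) = - a" by (simp add: algebra_simps)
  ultimately show ?thesis by simp
qed

text \<open>On [t + a, t + a + K a] the mass is a geometric sum with ratio exp (- a).\<close>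
lemma integral_tail_partial:
  "((\<lambda>s. nsol a N s t) has_integral Nplus a * exp (- t) * (1 - exp (- (real K * a))))
     {t + a .. t + a + real K * a}"
proof (induction K)
  case 0
  show ?case using has_integral_refl(1)[of "\<lambda>s. nsol a N s t" "t + a"] by simp
next
  case (Suc K)
  have "max 0 (t + (real (Suc K) - 1) * a) = t + real K * a"
    using t_period period_pos by simp
  then have coeff: "Nplus a * exp (- max 0 (t + (real (Suc K) - 1) * a)) * (1 - exp (- a))
      = Nplus a * exp (- t) * (exp (- (real K * a)) - exp (- (real (Suc K) * a)))"
    by (simp add: distrib_right exp_add[symmetric] algebra_simps)
  have lo: "t + real (Suc K) * a = t + a + real K * a"
    and hi: "t + real (Suc (Suc K)) * a = t + a + real (Suc K) * a"
    by (simp_all add: algebra_simps)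
  have next_period: "((\<lambda>s. nsol a N s t) has_integral
      Nplus a * exp (- t) * (exp (- (real K * a)) - exp (- (real (Suc K) * a))))
      {t + a + real K * a .. t + a + real (Suc K) * a}"
    using integral_period[of "Suc K"] unfolding coeff lo hi .
  have "((\<lambda>s. nsol a N s t) has_integral
      Nplus a * exp (- t) * (1 - exp (- (real K * a)))
      + Nplus a * exp (- t) * (exp (- (real K * a)) - exp (- (real (Suc K) * a))))
      {t + a .. t + a + real (Suc K) * a}"
    by (rule has_integral_combine[OF _ _ Suc next_period]) (use period_pos in auto)
  then show ?case by (simp add: algebra_simps)
qed

text \<open>The mass of the individuals exposed to death, i.e. older than sigma (N t) = t + a.\<close>
lemma integral_tail: "((\<lambda>s. nsol a N s t) has_integral Nplus a * exp (- t)) {t + a..}"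
proof (rule has_integral_halfline_limit[OF period_pos negligible_int_lattice _ integral_tail_partial])
  fix s assume "s \<in> {t + a..} - range (\<lambda>m::int. t + of_int m * a)"
  then have "phase (s - t) \<noteq> 0" by (intro phase_off_lattice) auto
  then have "phase (t - s) \<noteq> 0"
    using phase_eq_zero_iff[of "s - t"] phase_eq_zero_iff[of "t - s"]
    by (metis minus_diff_eq mult_minus_left of_int_minus)
  then show "nsol a N s t \<ge> 0"
    using N_phase Nplus_pos by (simp add: nsol_def)
next
  have "(\<lambda>K. exp (- a) ^ K) \<longlonglongrightarrow> 0"
    by (rule LIMSEQ_power_zero) (use period_pos in simp)
  then have "(\<lambda>K. exp (- (real K * a))) \<longlonglongrightarrow> 0"
    by (simp add: exp_of_nat_mult[symmetric] mult.commute)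
  then have "(\<lambda>K. Nplus a * exp (- t) * (1 - exp (- (real K * a)))) \<longlonglongrightarrow> Nplus a * exp (- t) * (1 - 0)"
    by (intro tendsto_intros)
  then show "(\<lambda>K. Nplus a * exp (- t) * (1 - exp (- (real K * a)))) \<longlonglongrightarrow> Nplus a * exp (- t)"
    by simp
qed

lemma periodic_solution_in_period:
  "((\<lambda>s. nsol a N s t) has_integral N t) {sigma a (N t)..} \<and>
   ((\<lambda>s. nsol a N s t) has_integral 1) {0..}"
proof
  have N_t: "N t = Nplus a * exp (- t)" using on_period t_period by simp
  then have sigma_t: "sigma a (N t) = t + a" using sigma_sawtooth t_period by simp
  show "((\<lambda>s. nsol a N s t) has_integral N t) {sigma a (N t)..}"
    using integral_tail N_t sigma_t by simp
  have first_period: "((\<lambda>s. nsol a N s t) has_integral Nplus a * (1 - exp (- a))) {t..t + a}"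
    using integral_period[of 0] t_period period_pos by simp
  have "((\<lambda>s. nsol a N s t) has_integral Nplus a * (1 - exp (- t)) + Nplus a * (1 - exp (- a))) {0..t + a}"
    by (rule has_integral_combine[OF _ _ integral_young first_period]) (use t_period period_pos in auto)
  then have "((\<lambda>s. nsol a N s t) has_integral
      Nplus a * (1 - exp (- t)) + Nplus a * (1 - exp (- a)) + Nplus a * exp (- t)) ({0..t + a} \<union> {t + a..})"
    by (rule has_integral_Un[OF _ integral_tail]) (use t_period period_pos in auto)
  moreover have "{0..t + a} \<union> {t + a..} = {0..}" using t_period period_pos by auto
  moreover have "Nplus a * (1 - exp (- t)) + Nplus a * (1 - exp (- a)) + Nplus a * exp (- t) = 1"
    using Nplus_normalisation by (simp add: algebra_simps)
  ultimately show "((\<lambda>s. nsol a N s t) has_integral 1) {0..}" by simp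
qed

end

end


theorem mainTheorem11:
  fixes \<alpha> :: real and N :: "real \<Rightarrow> real" and t :: real
  assumes "\<alpha> > 0"
    and "\<And>x. N (x + \<alpha>) = N x"
    and "\<And>x. x \<in> {0<..<\<alpha>} \<Longrightarrow> N x = Nplus \<alpha> * exp (- x)"
    and "isCont N t"
  shows "((\<lambda>s. nsol \<alpha> N s t) has_integral N t) {sigma \<alpha> (N t)..} \<and>
         ((\<lambda>s. nsol \<alpha> N s t) has_integral 1) {0..}"
proof -
  interpret sawtooth \<alpha> N using assms(1-3) by unfold_locales
  define t0 where "t0 = phase t"
  have "t0 \<noteq> 0" using N_jumps[OF assms(4)] by (simp add: t0_def)
  then have t0_period: "t0 \<in> {0<..<\<alpha>}" using phase_bounds[of t] by (simp add: t0_def)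
  have t: "t = t0 + of_int \<lfloor>t / \<alpha>\<rfloor> * \<alpha>" by (simp add: t0_def phase_def)
  have "nsol \<alpha> N s t = nsol \<alpha> N s t0" for s using nsol_shift t by metis
  moreover have "N t = N t0" using periodic_int t by metis
  ultimately show ?thesis using periodic_solution_in_period[OF t0_period] by simp
qed

end
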